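(* Let $m\ge 1$, let $y_1,\dots,y_m$ be distinct integers each less than $-1$, and let $D=\{1,y_1,\dots,y_m\}$. If $(T,s)$ is a signed tree that realizes $D$, then $diam(T)\ge 4$ if $m=1$, $diam(T)\ge 5$ if $m=2$, and $diam(T)\ge 6$ if $m>2$.
   Context: A signed tree is a pair $(T,s)$ where $T$ is a finite tree and $s:E(T)\to\{+,-\}$. The signed degree $sdeg(v)$ of a vertex is the number of incident positive edges minus the number of incident negative edges. $(T,s)$ realizes $D$ if $D=\{sdeg(v):v\in V(T)\}$. $diam(T)$ denotes the diameter of $T$. *)

theory Defs
  imports Main
begin

definition simple_graph :: "'a set \<Rightarrow> 'a set set \<Rightarrow> bool" where
  "simple_graph V E \<longleftrightarrow> finite V \<and> (\<forall>e\<in>E. \<exists>u v. u \<in> V \<and> v \<in> V \<and> u \<noteq> v \<and> e = {u, v})"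

definition is_walk :: "'a set set \<Rightarrow> 'a list \<Rightarrow> bool" where
  "is_walk E p \<longleftrightarrow> p \<noteq> [] \<and> (\<forall>i. Suc i < length p \<longrightarrow> {p ! i, p ! Suc i} \<in> E)"

definition connected_graph :: "'a set \<Rightarrow> 'a set set \<Rightarrow> bool" where
  "connected_graph V E \<longleftrightarrow> V \<noteq> {} \<and>
     (\<forall>u\<in>V. \<forall>v\<in>V. \<exists>p. is_walk E p \<and> hd p = u \<and> last p = v)"

definition is_cycle :: "'a set set \<Rightarrow> 'a list \<Rightarrow> bool" where
  "is_cycle E c \<longleftrightarrow> length c \<ge> 3 \<and> distinct c \<and> is_walk E c \<and> {last c, hd c} \<in> E"

definition acyclic_graph :: "'a set set \<Rightarrow> bool" where
  "acyclic_graph E \<longleftrightarrow> \<not> (\<exists>c. is_cycle E c)"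

definition is_tree :: "'a set \<Rightarrow> 'a set set \<Rightarrow> bool" where
  "is_tree V E \<longleftrightarrow> simple_graph V E \<and> connected_graph V E \<and> acyclic_graph E"

definition gdist :: "'a set set \<Rightarrow> 'a \<Rightarrow> 'a \<Rightarrow> nat" where
  "gdist E u v = (LEAST n. \<exists>p. is_walk E p \<and> hd p = u \<and> last p = v \<and> length p = Suc n)"

definition diam :: "'a set \<Rightarrow> 'a set set \<Rightarrow> nat" where
  "diam V E = Max {gdist E u v | u v. u \<in> V \<and> v \<in> V}"

text \<open>Signing: s e = True means e is positive, False means negative.\<close>

definition sdeg :: "'a set set \<Rightarrow> ('a set \<Rightarrow> bool) \<Rightarrow> 'a \<Rightarrow> int" where
  "sdeg E s v = int (card {e\<in>E. v \<in> e \<and> s e}) - int (card {e\<in>E. v \<in> e \<and> \<not> s e})"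

definition realizes :: "'a set \<Rightarrow> 'a set set \<Rightarrow> ('a set \<Rightarrow> bool) \<Rightarrow> int set \<Rightarrow> bool" where
  "realizes V E s D \<longleftrightarrow> D = sdeg E s ` V"

end

theory Submission
  imports Defs
begin

(* Every y_i is the signed degree of some vertex, and no vertex has signed degree -1.
   A vertex u with sdeg u < -1 has at least two negative edges, hence a negative
   neighbour w avoiding any prescribed vertex, and w is not a leaf because a leaf on a
   negative edge has signed degree -1. So a path ending at such a vertex can be
   prolonged there by two edges, and a path between two such vertices by four.
   In a tree a path is a shortest walk, so one such vertex gives diam >= 4, two give
   diam >= 5, and three give diam >= 6: they cannot be pairwise adjacent, and a
   path between non-adjacent vertices has at least two edges. *)

lemma walk_Cons_iff:
  assumes "p \<noteq> []"
  shows "is_walk E (x # p) \<longleftrightarrow> {x, hd p} \<in> E \<and> is_walk E p"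
  using assms unfolding is_walk_def
  by (auto simp: hd_conv_nth) (metis not0_implies_Suc nth_Cons_0 nth_Cons_Suc)

lemma walk_rev: "is_walk E p \<Longrightarrow> is_walk E (rev p)"
  unfolding is_walk_def
  by (auto simp: rev_nth)
    (metis Suc_diff_Suc diff_less insert_commute length_greater_0_conv zero_less_Suc)

lemma walk_take: "is_walk E p \<Longrightarrow> 0 < k \<Longrightarrow> is_walk E (take k p)"
  unfolding is_walk_def by auto

lemma walk_drop: "is_walk E p \<Longrightarrow> k < length p \<Longrightarrow> is_walk E (drop k p)"
  unfolding is_walk_def by auto

lemma walk_length_le_2:
  assumes "is_walk E p" "length p \<le> 2"
  shows "hd p = last p \<or> {hd p, last p} \<in> E"
proof -
  have "p \<noteq> []" using assms(1) unfolding is_walk_def by blast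
  then have "length p = 1 \<or> length p = 2" using assms(2) by (cases p) (auto simp: le_Suc_eq)
  then show ?thesis
  proof
    assume "length p = 2"
    then show ?thesis
      using assms(1) unfolding is_walk_def by (auto simp: hd_conv_nth last_conv_nth)
  qed (cases p, auto)
qed

lemma walk_shortcut:
  "is_walk E p \<Longrightarrow> \<exists>q. is_walk E q \<and> distinct q \<and> hd q = hd p \<and> last q = last p"
proof (induction p)
  case Nil
  then show ?case by (simp add: is_walk_def)
next
  case (Cons x p)
  show ?case
  proof (cases "p = []")
    case True
    then show ?thesis using Cons.prems by auto
  next
    case False
    then have edge: "{x, hd p} \<in> E" and "is_walk E p"
      using Cons.prems walk_Cons_iff[OF False] by blast+
    then obtain q where q: "is_walk E q" "distinct q" "hd q = hd p" "last q = last p"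
      using Cons.IH by blast
    have "q \<noteq> []" using q(1) unfolding is_walk_def by blast
    show ?thesis
    proof (cases "x \<in> set q")
      case True
      then obtain k where k: "k < length q" "q ! k = x" by (metis in_set_conv_nth)
      show ?thesis
        using walk_drop[OF q(1) k(1)] q k False
        by (intro exI[of _ "drop k q"]) (simp add: hd_drop_conv_nth)
    next
      case False
      then show ?thesis
        using walk_Cons_iff[OF \<open>q \<noteq> []\<close>] edge q \<open>p \<noteq> []\<close> \<open>q \<noteq> []\<close>
        by (intro exI[of _ "x # q"]) simp
    qed
  qed
qed

lemma tree_path_exists:
  assumes "is_tree V E" "u \<in> V" "v \<in> V"
  obtains p where "is_walk E p" "distinct p" "hd p = u" "last p = v"
proof -
  obtain q where "is_walk E q" "hd q = u" "last q = v"
    using assms unfolding is_tree_def connected_graph_def by blast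
  then show thesis using walk_shortcut that by metis
qed

lemma edge_vertices:
  assumes "simple_graph V E" "{x, y} \<in> E"
  shows "x \<noteq> y" "x \<in> V" "y \<in> V"
  using assms unfolding simple_graph_def by (auto simp: doubleton_eq_iff)

lemma edge_other_end:
  assumes "simple_graph V E" "e \<in> E" "x \<in> e"
  obtains z where "e = {x, z}" "z \<noteq> x"
proof -
  obtain u v where "e = {u, v}" "u \<noteq> v"
    using assms(1,2) unfolding simple_graph_def by blast
  moreover have "x = u \<or> x = v" using assms(3) \<open>e = {u, v}\<close> by blast
  ultimately show thesis using that by (metis insert_commute)
qed

lemma walk_vertices_subset:
  assumes "simple_graph V E" "is_walk E p" "2 \<le> length p"
  shows "set p \<subseteq> V"
proof
  fix x assume "x \<in> set p"
  then obtain i where i: "i < length p" "p ! i = x" by (metis in_set_conv_nth)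
  show "x \<in> V"
  proof (cases "Suc i < length p")
    case True
    then have "{p ! i, p ! Suc i} \<in> E" using assms(2) unfolding is_walk_def by blast
    then show ?thesis using edge_vertices(2)[OF assms(1)] i by blast
  next
    case False
    then obtain j where "i = Suc j" using i assms(3) by (cases i) auto
    then have "{p ! j, p ! Suc j} \<in> E" using assms(2) i unfolding is_walk_def by blast
    then have "{p ! j, p ! i} \<in> E" using \<open>i = Suc j\<close> by simp
    then show ?thesis using edge_vertices(3)[OF assms(1)] i by blast
  qed
qed

lemma path_Cons:
  assumes "simple_graph V E" "acyclic_graph E" "is_walk E p" "distinct p" "{x, hd p} \<in> E"
    and "Suc 0 < length p \<Longrightarrow> x \<noteq> p ! 1"
  shows "is_walk E (x # p)" "distinct (x # p)"
proof -
  have "p \<noteq> []" using assms(3) unfolding is_walk_def by blast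
  then show "is_walk E (x # p)" using walk_Cons_iff[OF \<open>p \<noteq> []\<close>] assms(3,5) by blast
  have "x \<notin> set p"
  proof
    assume "x \<in> set p"
    then obtain j where j: "j < length p" "p ! j = x" by (metis in_set_conv_nth)
    have "j \<noteq> 0" using edge_vertices(1)[OF assms(1,5)] j \<open>p \<noteq> []\<close> by (metis hd_conv_nth)
    moreover have "j \<noteq> 1" using assms(6) j by auto
    ultimately have "3 \<le> length (take (Suc j) p)" using j by simp
    moreover have "last (take (Suc j) p) = x" using j by (simp add: take_Suc_conv_app_nth)
    moreover have "hd (take (Suc j) p) = hd p" using \<open>p \<noteq> []\<close> by simp
    ultimately have "is_cycle E (take (Suc j) p)"
      unfolding is_cycle_def using assms(4,5) walk_take[OF assms(3)] by (simp add: insert_commute)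
    then show False using assms(2) unfolding acyclic_graph_def by blast
  qed
  then show "distinct (x # p)" using assms(4) by simp
qed

lemma path_length_le_walk:
  assumes "simple_graph V E" "acyclic_graph E"
  shows "is_walk E q \<Longrightarrow> is_walk E p \<Longrightarrow> distinct p \<Longrightarrow> hd q = hd p \<Longrightarrow> last q = last p
    \<Longrightarrow> length p \<le> length q"
proof (induction q arbitrary: p)
  case Nil
  then show ?case by (simp add: is_walk_def)
next
  case (Cons x q)
  have "p \<noteq> []" using Cons.prems(2) unfolding is_walk_def by blast
  then obtain p' where p: "p = x # p'" using Cons.prems(4) by (cases p) auto
  show ?case
  proof (cases "q = []")
    case True
    then have "p' = []" using Cons.prems(3,5) p by (cases p' rule: rev_cases) auto
    then show ?thesis using p by simp
  next
    case False
    have q: "{x, hd q} \<in> E" "is_walk E q" using Cons.prems(1) walk_Cons_iff[OF False] by blast+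
    have last_q: "last q = last p" using Cons.prems(5) False by simp
    show ?thesis
    proof (cases "p' \<noteq> [] \<and> hd q = hd p'")
      case True
      then have "is_walk E p'" using Cons.prems(2) p walk_Cons_iff[of p'] by blast
      moreover have "distinct p'" using Cons.prems(3) p by simp
      ultimately have "length p' \<le> length q" using Cons.IH q(2) True last_q p by simp
      then show ?thesis using p by simp
    next
      case False
      \<comment> \<open>the walk leaves p's first edge: its second vertex prepended to p is again a path\<close>
      have "Suc 0 < length p \<Longrightarrow> hd q \<noteq> p ! 1" using False p by (cases p') auto
      moreover have "{hd q, hd p} \<in> E" using q(1) p by (simp add: insert_commute)
      ultimately have "is_walk E (hd q # p)" "distinct (hd q # p)"
        using path_Cons[OF assms Cons.prems(2,3)] by blast+
      then have "length (hd q # p) \<le> length q"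
        using last_q \<open>p \<noteq> []\<close> by (intro Cons.IH[OF q(2)]) auto
      then show ?thesis by simp
    qed
  qed
qed

lemma path_length_le_gdist:
  assumes "simple_graph V E" "acyclic_graph E" "is_walk E p" "distinct p"
  shows "length p \<le> Suc (gdist E (hd p) (last p))"
proof -
  have "\<exists>n q. is_walk E q \<and> hd q = hd p \<and> last q = last p \<and> length q = Suc n"
    using assms(3) by (intro exI[of _ "length p - 1"] exI[of _ p]) (auto simp: is_walk_def)
  from LeastI_ex[OF this] obtain q where q: "is_walk E q" "hd q = hd p" "last q = last p"
    "length q = Suc (gdist E (hd p) (last p))"
    unfolding gdist_def by blast
  then show ?thesis using path_length_le_walk[OF assms(1,2) q(1) assms(3,4)] by simp
qed

lemma gdist_le_diam: "finite V \<Longrightarrow> u \<in> V \<Longrightarrow> v \<in> V \<Longrightarrow> gdist E u v \<le> diam V E"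
  unfolding diam_def by (intro Max_ge finite_image_set2) auto

lemma path_length_le_diam:
  assumes "is_tree V E" "is_walk E p" "distinct p" "hd p \<in> V" "last p \<in> V"
  shows "length p \<le> Suc (diam V E)"
proof -
  have "length p \<le> Suc (gdist E (hd p) (last p))"
    using path_length_le_gdist assms(1,2,3) unfolding is_tree_def by blast
  also have "\<dots> \<le> Suc (diam V E)"
    using gdist_le_diam[of V "hd p" "last p" E] assms(1,4,5)
    unfolding is_tree_def simple_graph_def by simp
  finally show ?thesis .
qed

lemma acyclic_no_triangle:
  assumes "acyclic_graph E" "u \<noteq> v" "v \<noteq> w" "u \<noteq> w"
    and "{u, v} \<in> E" "{v, w} \<in> E" "{w, u} \<in> E"
  shows False
proof -
  have "is_cycle E [u, v, w]"
    using assms(2-) unfolding is_cycle_def is_walk_def by (auto simp: less_Suc_eq nth_Cons')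
  then show False using assms(1) unfolding acyclic_graph_def by blast
qed

lemma negative_neighbour_avoiding:
  assumes "simple_graph V E" "sdeg E s u < -1"
  obtains w where "{u, w} \<in> E" "\<not> s {u, w}" "w \<noteq> z"
proof -
  let ?N = "{e \<in> E. u \<in> e \<and> \<not> s e}"
  have "2 \<le> card ?N" using assms(2) unfolding sdeg_def by linarith
  then have "\<not> ?N \<subseteq> {{u, z}}" using card_mono[of "{{u, z}}" ?N] by auto
  then obtain e where e: "e \<in> E" "u \<in> e" "\<not> s e" "e \<noteq> {u, z}" by blast
  obtain w where "e = {u, w}" "w \<noteq> u" by (rule edge_other_end[OF assms(1) e(1,2)])
  then show thesis using that e by blast
qed

lemma sdeg_pendant_negative:
  assumes "{u, w} \<in> E" "\<not> s {u, w}" "\<And>e. e \<in> E \<Longrightarrow> w \<in> e \<Longrightarrow> e = {u, w}"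
  shows "sdeg E s w = -1"
proof -
  have positive: "{e \<in> E. w \<in> e \<and> s e} = {}" using assms(2,3) by blast
  have negative: "{e \<in> E. w \<in> e \<and> \<not> s e} = {{u, w}}" using assms by blast
  show ?thesis unfolding sdeg_def positive negative by simp
qed

lemma negative_neighbour_not_leaf:
  assumes "simple_graph V E" "{u, w} \<in> E" "\<not> s {u, w}" "sdeg E s w \<noteq> -1"
  obtains b where "{w, b} \<in> E" "b \<noteq> u"
proof -
  have "\<exists>b. {w, b} \<in> E \<and> b \<noteq> u"
  proof (rule ccontr)
    assume no_other: "\<nexists>b. {w, b} \<in> E \<and> b \<noteq> u"
    have "e = {u, w}" if e: "e \<in> E" "w \<in> e" for e
    proof -
      obtain b where "e = {w, b}" "b \<noteq> w" by (rule edge_other_end[OF assms(1) e])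
      then show ?thesis using no_other e(1) by (auto simp: insert_commute)
    qed
    then have "sdeg E s w = -1" by (rule sdeg_pendant_negative[where s = s, OF assms(2,3)])
    then show False using assms(4) by simp
  qed
  then show thesis using that by blast
qed

lemma path_extend_at_negative_vertex:
  assumes "is_tree V E" "\<forall>v\<in>V. sdeg E s v \<noteq> -1"
    and "is_walk E p" "distinct p" "sdeg E s (hd p) < -1"
  obtains a b where "is_walk E (b # a # p)" "distinct (b # a # p)"
proof -
  have sg: "simple_graph V E" and ac: "acyclic_graph E" using assms(1) unfolding is_tree_def by blast+
  have "p \<noteq> []" using assms(3) unfolding is_walk_def by blast
  obtain a where a: "{hd p, a} \<in> E" "\<not> s {hd p, a}" "a \<noteq> p ! 1"
    by (rule negative_neighbour_avoiding[OF sg assms(5)])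
  have "sdeg E s a \<noteq> -1" using assms(2) edge_vertices(3)[OF sg a(1)] by blast
  then obtain b where b: "{a, b} \<in> E" "b \<noteq> hd p"
    by (rule negative_neighbour_not_leaf[where u = "hd p" and w = a and s = s, OF sg a(1,2)])
  have "{a, hd p} \<in> E" "Suc 0 < length p \<Longrightarrow> a \<noteq> p ! 1"
    using a(1,3) by (simp_all add: insert_commute)
  note a_p = path_Cons[OF sg ac assms(3,4) this]
  have "{b, hd (a # p)} \<in> E" "Suc 0 < length (a # p) \<Longrightarrow> b \<noteq> (a # p) ! 1"
    using b \<open>p \<noteq> []\<close> by (simp_all add: insert_commute hd_conv_nth)
  from path_Cons[OF sg ac a_p this] show thesis by (rule that)
qed

lemma diam_ge_negative_path:
  assumes "is_tree V E" "\<forall>v\<in>V. sdeg E s v \<noteq> -1"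
    and "is_walk E p" "distinct p" "sdeg E s (hd p) < -1" "sdeg E s (last p) < -1"
  shows "length p + 3 \<le> diam V E"
proof -
  have "p \<noteq> []" using assms(3) unfolding is_walk_def by blast
  obtain a b where ab: "is_walk E (b # a # p)" "distinct (b # a # p)"
    by (rule path_extend_at_negative_vertex[OF assms(1-5)])
  let ?r = "rev (b # a # p)"
  have "is_walk E ?r" "distinct ?r" "sdeg E s (hd ?r) < -1"
    using walk_rev[OF ab(1)] ab(2) assms(6) \<open>p \<noteq> []\<close> by (auto simp: hd_rev)
  then obtain c d where cd: "is_walk E (d # c # ?r)" "distinct (d # c # ?r)"
    by (rule path_extend_at_negative_vertex[OF assms(1,2)])
  have "set (d # c # ?r) \<subseteq> V"
    using walk_vertices_subset cd(1) assms(1) unfolding is_tree_def by fastforce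
  then have "length (d # c # ?r) \<le> Suc (diam V E)"
    using path_length_le_diam[OF assms(1) cd] by simp
  then show ?thesis by simp
qed

lemma diam_ge_negative_pair:
  assumes "is_tree V E" "\<forall>v\<in>V. sdeg E s v \<noteq> -1"
    and "u \<in> V" "v \<in> V" "sdeg E s u < -1" "sdeg E s v < -1"
  shows "(if u = v then 4 else if {u, v} \<in> E then 5 else 6) \<le> diam V E"
proof -
  obtain p where p: "is_walk E p" "distinct p" "hd p = u" "last p = v"
    using tree_path_exists[OF assms(1,3,4)] .
  have "p \<noteq> []" using p(1) unfolding is_walk_def by blast
  have "1 \<le> length p" using \<open>p \<noteq> []\<close> by (simp add: Suc_le_eq)
  moreover have "2 \<le> length p" if "u \<noteq> v"
    using p(3,4) that \<open>p \<noteq> []\<close> by (cases p) (auto simp: Suc_le_eq split: if_splits)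
  moreover have "3 \<le> length p" if "u \<noteq> v" "{u, v} \<notin> E"
    using walk_length_le_2[OF p(1)] p(3,4) that by fastforce
  ultimately have "(if u = v then 1 else if {u, v} \<in> E then 2 else 3) \<le> length p"
    by auto
  then show ?thesis
    using diam_ge_negative_path[OF assms(1,2) p(1,2)] p(3,4) assms(5,6) by (auto split: if_splits)
qed

lemma diam_ge_negative_triple:
  assumes "is_tree V E" "\<forall>v\<in>V. sdeg E s v \<noteq> -1"
    and "u \<in> V" "v \<in> V" "w \<in> V" "sdeg E s u < -1" "sdeg E s v < -1" "sdeg E s w < -1"
    and "u \<noteq> v" "v \<noteq> w" "u \<noteq> w"
  shows "6 \<le> diam V E"
proof -
  have "acyclic_graph E" using assms(1) unfolding is_tree_def by blast
  then have "{u, v} \<notin> E \<or> {v, w} \<notin> E \<or> {w, u} \<notin> E"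
    using acyclic_no_triangle[OF _ assms(9-11)] by blast
  moreover have "w \<noteq> u" using assms(11) by blast
  ultimately show ?thesis
    using diam_ge_negative_pair[OF assms(1,2), of u v] diam_ge_negative_pair[OF assms(1,2), of v w]
      diam_ge_negative_pair[OF assms(1,2), of w u] assms(3-10)
    by (auto split: if_splits)
qed

lemma realizing_vertices:
  assumes "realizes V E s D" "inj_on y A" "y ` A \<subseteq> D"
  obtains x where "inj_on x A" "\<forall>i\<in>A. x i \<in> V \<and> sdeg E s (x i) = y i"
proof -
  have "\<forall>i\<in>A. \<exists>v. v \<in> V \<and> sdeg E s v = y i"
    using assms(1,3) unfolding realizes_def by fastforce
  from bchoice[OF this] obtain x where x: "\<forall>i\<in>A. x i \<in> V \<and> sdeg E s (x i) = y i"
    by blast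
  have "inj_on x A"
  proof (rule inj_onI)
    fix i j assume "i \<in> A" "j \<in> A" and "x i = x j"
    moreover have "y i = sdeg E s (x i)" "y j = sdeg E s (x j)" using x \<open>i \<in> A\<close> \<open>j \<in> A\<close> by auto
    ultimately have "y i = y j" by simp
    then show "i = j" using assms(2) \<open>i \<in> A\<close> \<open>j \<in> A\<close> by (simp add: inj_on_eq_iff)
  qed
  then show thesis using that x by blast
qed

theorem mainTheorem5:
  fixes V :: "'a set" and E :: "'a set set" and s :: "'a set \<Rightarrow> bool"
    and m :: nat and y :: "nat \<Rightarrow> int" and D :: "int set"
  assumes "m \<ge> 1"
    and "inj_on y {1..m}"
    and "\<forall>i\<in>{1..m}. y i < -1"
    and "D = insert 1 (y ` {1..m})"
    and "is_tree V E"
    and "realizes V E s D"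
  shows "(m = 1 \<longrightarrow> diam V E \<ge> 4) \<and> (m = 2 \<longrightarrow> diam V E \<ge> 5) \<and> (m > 2 \<longrightarrow> diam V E \<ge> 6)"
proof -
  have "-1 \<notin> sdeg E s ` V" using assms(3,4,6) unfolding realizes_def by auto
  then have "\<forall>v\<in>V. sdeg E s v \<noteq> -1" by (metis image_eqI)
  note pair = diam_ge_negative_pair[OF assms(5) this]
    and triple = diam_ge_negative_triple[OF assms(5) this]
  obtain x where x: "inj_on x {1..m}" "\<forall>i\<in>{1..m}. x i \<in> V \<and> sdeg E s (x i) = y i"
    using realizing_vertices[OF assms(6,2)] assms(4) by blast
  have "4 \<le> diam V E" using pair[of "x 1" "x 1"] x assms(1,3) by simp
  moreover have "5 \<le> diam V E" if "m \<ge> 2"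
    using pair[of "x 1" "x 2"] x assms(3) that by (auto simp: inj_on_eq_iff split: if_splits)
  moreover have "6 \<le> diam V E" if "m > 2"
    using triple[of "x 1" "x 2" "x 3"] x assms(3) that by (auto simp: inj_on_eq_iff)
  ultimately show ?thesis by auto
qed

end
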